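(* Assume $\bar\Phi_p=0$, $\Phi_p^\top\Phi_p=\mathrm{diag}(\sigma_1^2,\dots,\sigma_d^2)$ with all $\sigma_j^2>0$, $\delta>0$, $\lambda\ge0$, and that every entry of $\hat\beta_{\mathrm{ols}}$ is nonzero. Let $\hat\beta^\lambda_{\mathrm{lasso}}$ be the (unique) minimizer of $\|Y_p-\Phi_p\beta\|_2^2+\lambda\|\beta\|_1$ and $I_\lambda:=\{j:\hat\beta^\lambda_{\mathrm{lasso},j}\neq0\}$. Let $\hat\Phi_q^\delta:=\mathcal T_\delta(\bar\Phi_q-\bar\Phi_p)$ be the reweighted features of the $\ell_\infty$ balancing weights with parameter $\delta$, and $I_\delta:=\{j:\hat\Phi^\delta_{q,j}\neq0\}$. Let $\hat\beta_{\ell_\infty}$ be the augmented coefficients obtained with $\hat\beta_{\mathrm{reg}}=\hat\beta^\lambda_{\mathrm{lasso}}$, i.e. with $\Delta_j:=\bar\Phi_{q,j}-\bar\Phi_{p,j}$, $\hat\beta_{\ell_\infty,j}=\hat\beta^\lambda_{\mathrm{lasso},j}$ if $|\Delta_j|<\delta$ and $\hat\beta_{\ell_\infty,j}=|\delta/\Delta_j|\hat\beta^\lambda_{\mathrm{lasso},j}+(1-|\delta/\Delta_j|)\hat\beta_{\mathrm{ols},j}$ otherwise. Then $$\{j:\hat\beta_{\ell_\infty,j}\neq0\}=I_\lambda\cup I_\delta.$$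
   Context: $\Phi_p\in\mathbb{R}^{n\times d}$, $Y_p\in\mathbb{R}^n$, $\Phi_q\in\mathbb{R}^{n\times d}$, column averages $\bar\Phi_p,\bar\Phi_q$. $\hat\beta_{\mathrm{ols}}:=(\Phi_p^\top\Phi_p)^{-1}\Phi_p^\top Y_p$. $\mathcal T_t$ is entrywise soft-thresholding: $\mathcal T_t(z)=0$ if $|z|\le t$, $z-t$ if $z>t$, $z+t$ if $z<-t$. By the preceding result, $\bar\Phi_q\hat\beta_{\ell_\infty}$ equals the lasso outcome model augmented with $\ell_\infty$ balancing weights. *)

theory Defs
  imports "HOL-Analysis.Analysis"
begin

definition col_avg :: "real^'d^'n \<Rightarrow> real^'d" where
  "col_avg \<Phi> = (\<chi> j. (\<Sum>i\<in>UNIV. \<Phi> $ i $ j) / real CARD('n))"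

definition beta_ols :: "real^'d^'n \<Rightarrow> real^'n \<Rightarrow> real^'d" where
  "beta_ols \<Phi> Y = matrix_inv (transpose \<Phi> ** \<Phi>) *v (transpose \<Phi> *v Y)"

definition lasso_obj :: "real^'d^'n \<Rightarrow> real^'n \<Rightarrow> real \<Rightarrow> real^'d \<Rightarrow> real" where
  "lasso_obj \<Phi> Y lam \<beta> = (norm (Y - \<Phi> *v \<beta>))^2 + lam * (\<Sum>j\<in>UNIV. \<bar>\<beta> $ j\<bar>)"

definition is_lasso_minimizer :: "real^'d^'n \<Rightarrow> real^'n \<Rightarrow> real \<Rightarrow> real^'d \<Rightarrow> bool" where
  "is_lasso_minimizer \<Phi> Y lam \<beta> \<longleftrightarrow> (\<forall>\<gamma>. lasso_obj \<Phi> Y lam \<beta> \<le> lasso_obj \<Phi> Y lam \<gamma>)"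

definition soft_thresh :: "real \<Rightarrow> real \<Rightarrow> real" where
  "soft_thresh t z = (if \<bar>z\<bar> \<le> t then 0 else if z > t then z - t else z + t)"

definition beta_linf :: "real^'d^'n \<Rightarrow> real^'n \<Rightarrow> real^'d^'n \<Rightarrow> real \<Rightarrow> real^'d \<Rightarrow> real^'d" where
  "beta_linf \<Phi>p Y \<Phi>q \<delta> \<beta>reg = (\<chi> j.
     (let \<Delta> = col_avg \<Phi>q $ j - col_avg \<Phi>p $ j in
      if \<bar>\<Delta>\<bar> < \<delta> then \<beta>reg $ j
      else \<bar>\<delta> / \<Delta>\<bar> * \<beta>reg $ j + (1 - \<bar>\<delta> / \<Delta>\<bar>) * beta_ols \<Phi>p Y $ j))"

end

theory Submission
  imports Defs
begin

text \<open>With an orthogonal design the lasso and OLS coefficients agree in sign coordinatewise: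
flipping the sign of one lasso coefficient leaves the penalty unchanged and changes the squared
residual by exactly \<open>4 \<beta>\<^sub>j (\<Phi>\<^sup>T Y)\<^sub>j\<close>, so minimality forces this to be nonnegative.
On coordinates with \<open>|\<Delta>\<^sub>j| > \<delta>\<close> the augmented coefficient is a proper convex combination of
two numbers of the same sign, the second one nonzero, hence nonzero; on the others it is the
lasso coefficient itself.\<close>

abbreviation diag_mat :: "real^'d \<Rightarrow> real^'d^'d" where
  "diag_mat d \<equiv> \<chi> j k. if j = k then d $ j else 0"

lemma diag_mat_mult_vector: "diag_mat d *v x = (\<chi> j. d $ j * x $ j)"
  by (simp add: matrix_vector_mult_def vec_eq_iff if_distrib[where f="\<lambda>a. a * _"] cong: if_cong)

lemma invertible_diag_mat:
  assumes "\<forall>j. d $ j \<noteq> 0"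
  shows "invertible (diag_mat d)"
proof -
  have "diag_mat d ** diag_mat (\<chi> j. 1 / d $ j) = mat 1"
    and "diag_mat (\<chi> j. 1 / d $ j) ** diag_mat d = mat 1"
    using assms
    by (simp_all add: matrix_matrix_mult_def vec_eq_iff mat_def if_distrib[where f="\<lambda>a. a * _"]
        cong: if_cong)
  then show ?thesis
    unfolding invertible_def by blast
qed

lemma matrix_mul_matrix_inv:
  fixes A :: "'a::semiring_1^'n^'m"
  assumes "invertible A"
  shows "A ** matrix_inv A = mat 1"
  using someI_ex[OF assms[unfolded invertible_def]] unfolding matrix_inv_def by blast

lemma beta_ols_diagonal_gram:
  fixes \<Phi> :: "real^'d^'n"
  assumes gram: "transpose \<Phi> ** \<Phi> = diag_mat \<sigma>2" and "\<forall>j. \<sigma>2 $ j \<noteq> 0"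
  shows "\<sigma>2 $ j * beta_ols \<Phi> Y $ j = (transpose \<Phi> *v Y) $ j"
proof -
  have "diag_mat \<sigma>2 *v beta_ols \<Phi> Y = transpose \<Phi> *v Y"
    unfolding beta_ols_def gram
    by (simp add: matrix_vector_mul_assoc matrix_mul_matrix_inv invertible_diag_mat assms(2))
  then show ?thesis
    by (simp add: diag_mat_mult_vector vec_eq_iff)
qed

lemma norm_residual_flip_coordinate:
  fixes \<Phi> :: "real^'d^'n"
  assumes gram: "transpose \<Phi> ** \<Phi> = diag_mat \<sigma>2"
  shows "(norm (Y - \<Phi> *v (\<beta> - (2 * \<beta> $ j) *\<^sub>R axis j 1)))\<^sup>2
           = (norm (Y - \<Phi> *v \<beta>))\<^sup>2 + 4 * \<beta> $ j * (transpose \<Phi> *v Y) $ j"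
proof -
  define r where "r = Y - \<Phi> *v \<beta>"
  define u where "u = \<Phi> *v axis j 1"
  have residual: "Y - \<Phi> *v (\<beta> - (2 * \<beta> $ j) *\<^sub>R axis j 1) = r + (2 * \<beta> $ j) *\<^sub>R u"
    unfolding r_def u_def
    by (simp add: algebra_simps)
  have adjoint: "v \<bullet> (\<Phi> *v w) = (transpose \<Phi> *v v) \<bullet> w" for v w
    by (simp add: dot_lmul_matrix)
  have "transpose \<Phi> *v r = transpose \<Phi> *v Y - diag_mat \<sigma>2 *v \<beta>"
    unfolding r_def gram[symmetric]
    by (simp add: matrix_vector_mult_diff_distrib matrix_vector_mul_assoc)
  then have ru: "r \<bullet> u = (transpose \<Phi> *v Y) $ j - \<sigma>2 $ j * \<beta> $ j"
    unfolding u_def adjoint by (simp add: inner_axis diag_mat_mult_vector)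
  moreover have uu: "u \<bullet> u = \<sigma>2 $ j"
    unfolding u_def adjoint
    by (simp add: matrix_vector_mul_assoc gram diag_mat_mult_vector inner_axis)
  show ?thesis
    unfolding residual r_def[symmetric] power2_norm_eq_inner
    by (simp add: inner_commute[of u r] ru uu algebra_simps)
qed

lemma lasso_minimizer_sign:
  fixes \<Phi> :: "real^'d^'n"
  assumes "transpose \<Phi> ** \<Phi> = diag_mat \<sigma>2" and "is_lasso_minimizer \<Phi> Y lam \<beta>"
  shows "0 \<le> \<beta> $ j * (transpose \<Phi> *v Y) $ j"
proof -
  define \<gamma> where "\<gamma> = \<beta> - (2 * \<beta> $ j) *\<^sub>R axis j 1"
  have "\<bar>\<gamma> $ k\<bar> = \<bar>\<beta> $ k\<bar>" for k
    by (cases "k = j") (auto simp: \<gamma>_def axis_def)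
  then have "lasso_obj \<Phi> Y lam \<gamma> = lasso_obj \<Phi> Y lam \<beta> + 4 * \<beta> $ j * (transpose \<Phi> *v Y) $ j"
    unfolding lasso_obj_def \<gamma>_def norm_residual_flip_coordinate[OF assms(1)]
    by (simp add: \<gamma>_def)
  moreover have "lasso_obj \<Phi> Y lam \<beta> \<le> lasso_obj \<Phi> Y lam \<gamma>"
    using assms(2) unfolding is_lasso_minimizer_def by blast
  ultimately show ?thesis
    by linarith
qed

lemma lasso_ols_same_sign:
  fixes \<Phi> :: "real^'d^'n"
  assumes "transpose \<Phi> ** \<Phi> = diag_mat \<sigma>2" and "\<forall>j. \<sigma>2 $ j > 0"
    and "is_lasso_minimizer \<Phi> Y lam \<beta>"
  shows "0 \<le> \<beta> $ j * beta_ols \<Phi> Y $ j"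
proof -
  have "0 < \<sigma>2 $ j"
    using assms(2) by blast
  moreover have "0 \<le> \<beta> $ j * (\<sigma>2 $ j * beta_ols \<Phi> Y $ j)"
    using lasso_minimizer_sign[OF assms(1,3)] beta_ols_diagonal_gram[OF assms(1)] assms(2)
    by (metis less_irrefl)
  ultimately show ?thesis
    by (simp add: zero_le_mult_iff mult.left_commute[of "\<beta> $ j"])
qed

lemma soft_thresh_eq_0_iff: "soft_thresh t z = 0 \<longleftrightarrow> \<bar>z\<bar> \<le> t"
  unfolding soft_thresh_def by auto

lemma convex_combination_same_sign_nonzero:
  fixes a b c :: real
  assumes "0 < c" "c < 1" "0 \<le> a * b" "b \<noteq> 0"
  shows "c * a + (1 - c) * b \<noteq> 0"
proof
  assume "c * a + (1 - c) * b = 0"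
  then have "c * (a * b) + (1 - c) * b\<^sup>2 = 0"
    by (metis mult_zero_right distrib_left mult.left_commute power2_eq_square mult.commute)
  moreover have "0 \<le> c * (a * b)" and "0 < (1 - c) * b\<^sup>2"
    using assms by simp_all
  ultimately show False
    by linarith
qed

lemma augmented_coeff_nonzero_iff:
  fixes a b \<delta> \<Delta> :: real
  assumes "0 < \<delta>" "0 \<le> a * b" "b \<noteq> 0"
  shows "(if \<bar>\<Delta>\<bar> < \<delta> then a else \<bar>\<delta> / \<Delta>\<bar> * a + (1 - \<bar>\<delta> / \<Delta>\<bar>) * b) \<noteq> 0
           \<longleftrightarrow> a \<noteq> 0 \<or> \<delta> < \<bar>\<Delta>\<bar>"
proof (cases "\<delta> < \<bar>\<Delta>\<bar>")
  case True
  define c where "c = \<bar>\<delta> / \<Delta>\<bar>"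
  have "0 < c" and "c < 1"
    unfolding c_def using True assms(1) by auto
  then have "c * a + (1 - c) * b \<noteq> 0"
    using assms(2,3) by (rule convex_combination_same_sign_nonzero)
  then show ?thesis
    using True unfolding c_def by auto
next
  case False
  moreover have "\<bar>\<Delta>\<bar> = \<delta> \<Longrightarrow> \<bar>\<delta> / \<Delta>\<bar> = 1"
    using assms(1) by auto
  ultimately show ?thesis
    by auto
qed

theorem mainTheorem8:
  fixes \<Phi>p \<Phi>q :: "real^'d^'n" and Y :: "real^'n"
    and \<sigma>2 :: "real^'d" and \<delta> lam :: real and \<beta>lasso :: "real^'d"
  assumes "col_avg \<Phi>p = 0"
    and "transpose \<Phi>p ** \<Phi>p = (\<chi> j k. if j = k then \<sigma>2 $ j else 0)"
    and "\<forall>j. \<sigma>2 $ j > 0"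
    and "\<delta> > 0" and "lam \<ge> 0"
    and "\<forall>j. beta_ols \<Phi>p Y $ j \<noteq> 0"
    and "is_lasso_minimizer \<Phi>p Y lam \<beta>lasso"
  shows "{j. beta_linf \<Phi>p Y \<Phi>q \<delta> \<beta>lasso $ j \<noteq> 0}
         = {j. \<beta>lasso $ j \<noteq> 0}
           \<union> {j. soft_thresh \<delta> (col_avg \<Phi>q $ j - col_avg \<Phi>p $ j) \<noteq> 0}"
proof -
  have "beta_linf \<Phi>p Y \<Phi>q \<delta> \<beta>lasso $ j \<noteq> 0
          \<longleftrightarrow> \<beta>lasso $ j \<noteq> 0 \<or> \<delta> < \<bar>col_avg \<Phi>q $ j - col_avg \<Phi>p $ j\<bar>" for j
    unfolding beta_linf_def Let_def vec_lambda_beta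
    by (rule augmented_coeff_nonzero_iff[OF assms(4) lasso_ols_same_sign[OF assms(2,3,7)]
          assms(6)[rule_format]])
  then show ?thesis
    by (simp add: set_eq_iff soft_thresh_eq_0_iff not_le)
qed

end
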